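(* For every partition $\mu$ of $n$, the set of monomials $\mathcal{A}(\mu)$ coincides with the Garsia–Procesi basis $\mathcal{B}(\mu)$.
   Context: A partition $\mu$ of $n$ is drawn as a Young diagram with left-justified rows, row lengths weakly decreasing top to bottom. A row-strict filling of $\mu$ places $1,\dots,n$ bijectively in the boxes with entries increasing left to right along rows. Dimension pairs (with $h(j)=j$): $(a,b)$ is a dimension pair of $T$ if $b>a$; $b$ lies in the same column as $a$ strictly below it, or in a column strictly left of $a$'s; and if the box immediately right of $a$ exists and contains $c$, then $b\le c$. $\Phi(T)=\prod_{j=2}^n x_j^{|D^T_j|}$ where $D^T_j$ is the set of dimension pairs $(a,j)$; $\mathcal{A}(\mu)=\{\Phi(T):T$ row-strict filling of $\mu\}$. Dimension-ordering of a diagram with $r$ nonzero rows: label the far-right boxes of the nonzero rows $1,\dots,r$, ordering them by column from rightmost to leftmost and within a column top to bottom. GP-tree of $\mu$: Level $n$ consists of $\mu$. A Young diagram $\nu$ at Level $i$ with $r$ nonzero rows has $r$ children at Level $i-1$ via edges labelled $x_i^0,\dots,x_i^{r-1}$ (left to right); the child along $x_i^j$ is obtained from $\nu$ by removing the box with dimension-order label $j+1$ and then, if this leaves a gap in that box's column, pushing the boxes of that column below the gap up by one so the result is again a Young diagram. Level 1 vertices (single boxes) are labelled by the product of the edge labels on the path from the root. $\mathcal{B}(\mu)$ is the set of these Level 1 monomials (the Garsia–Procesi monomial basis of $\mathbb{Q}[x_1,\dots,x_n]/I_\mu$, $I_\mu$ the Tanisaki ideal). *)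

theory Defs
  imports Main
begin

text \<open>Boxes are pairs (row, column), 0-indexed, rows numbered top to bottom.
  Monomials in x_1,...,x_n are represented by exponent functions nat => nat
  (value at j = exponent of x_j).\<close>

type_synonym box = "nat \<times> nat"
type_synonym monomial = "nat \<Rightarrow> nat"

definition is_partition :: "nat list \<Rightarrow> nat \<Rightarrow> bool" where
  "is_partition \<mu> n \<longleftrightarrow> sorted (rev \<mu>) \<and> (\<forall>x\<in>set \<mu>. 0 < x) \<and> sum_list \<mu> = n"

definition diagram :: "nat list \<Rightarrow> box set" where
  "diagram \<mu> = {(r, c). r < length \<mu> \<and> c < \<mu> ! r}"

definition row_strict_filling :: "nat list \<Rightarrow> (box \<Rightarrow> nat) \<Rightarrow> bool" where
  "row_strict_filling \<mu> T \<longleftrightarrow>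
     bij_betw T (diagram \<mu>) {1..sum_list \<mu>} \<and>
     (\<forall>r c c'. (r, c) \<in> diagram \<mu> \<longrightarrow> (r, c') \<in> diagram \<mu> \<longrightarrow> c < c' \<longrightarrow> T (r, c) < T (r, c'))"

definition dim_pair :: "nat list \<Rightarrow> (box \<Rightarrow> nat) \<Rightarrow> nat \<Rightarrow> nat \<Rightarrow> bool" where
  "dim_pair \<mu> T a b \<longleftrightarrow> b > a \<and>
     (\<exists>p\<in>diagram \<mu>. \<exists>q\<in>diagram \<mu>. T p = a \<and> T q = b \<and>
        ((snd q = snd p \<and> fst q > fst p) \<or> snd q < snd p) \<and>
        ((fst p, Suc (snd p)) \<in> diagram \<mu> \<longrightarrow> b \<le> T (fst p, Suc (snd p))))"

definition Phi :: "nat list \<Rightarrow> (box \<Rightarrow> nat) \<Rightarrow> monomial" where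
  "Phi \<mu> T = (\<lambda>j. if 2 \<le> j \<and> j \<le> sum_list \<mu> then card {a. dim_pair \<mu> T a j} else 0)"

definition setA :: "nat list \<Rightarrow> monomial set" where
  "setA \<mu> = {Phi \<mu> T | T. row_strict_filling \<mu> T}"

definition nonzero_rows :: "box set \<Rightarrow> nat set" where
  "nonzero_rows D = {r. (r, 0) \<in> D}"

definition row_len :: "box set \<Rightarrow> nat \<Rightarrow> nat" where
  "row_len D r = card {c. (r, c) \<in> D}"

definition far_right :: "box set \<Rightarrow> box set" where
  "far_right D = {(r, row_len D r - 1) | r. r \<in> nonzero_rows D}"

definition dim_before :: "box \<Rightarrow> box \<Rightarrow> bool" where
  "dim_before p q \<longleftrightarrow> snd p > snd q \<or> (snd p = snd q \<and> fst p < fst q)"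

definition dim_label :: "box set \<Rightarrow> box \<Rightarrow> nat" where
  "dim_label D b = Suc (card {p \<in> far_right D. dim_before p b})"

definition remove_push :: "box set \<Rightarrow> box \<Rightarrow> box set" where
  "remove_push D b =
     {(r', c') \<in> D - {b}. c' \<noteq> snd b \<or> r' < fst b} \<union>
     {(r' - 1, snd b) | r'. r' > fst b \<and> (r', snd b) \<in> D}"

definition gp_child :: "box set \<Rightarrow> nat \<Rightarrow> box set" where
  "gp_child D j = remove_push D (THE b. b \<in> far_right D \<and> dim_label D b = Suc j)"

text \<open>Monomials labelling the level-1 leaves of the GP-subtree rooted at a diagram at level i.
  (Convention: at level 0 or 1 the subtree contributes only the empty product.)\<close>
fun gp_monos :: "nat \<Rightarrow> box set \<Rightarrow> monomial set" where
  "gp_monos 0 D = {(\<lambda>_. 0)}"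
| "gp_monos (Suc 0) D = {(\<lambda>_. 0)}"
| "gp_monos (Suc (Suc k)) D =
     (\<Union>j<card (nonzero_rows D). (\<lambda>m. m(Suc (Suc k) := j)) ` gp_monos (Suc k) (gp_child D j))"

definition setB :: "nat list \<Rightarrow> monomial set" where
  "setB \<mu> = gp_monos (sum_list \<mu>) (diagram \<mu>)"

end

theory Submission
  imports Defs "HOL-Library.Multiset" "HOL-Combinatorics.Transposition"
begin

(* A row-strict filling T of \<mu> is determined by its row word w, where w v is
   the row of \<mu> containing the entry v: the entries of row r are the positions of the letter r
   in w, in increasing order.  Under this encoding the dimension pairs (a, j) of T correspond
   bijectively to the rows R \<noteq> w j which, among the letters before position j, occur at least
   two times more often than w j, or exactly once more and lie above w j.  Hence A(\<mu>) is the set of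
   monomials of the row words with content \<mu> (setA_eq_word_monomials).

   Deleting the last letter of a row word gives a recursion on n (word_monomials_rec) in which the
   exponent of x_n is the number of rows above the row containing n; for a partition this is the
   index of that row.  The GP-tree obeys the same recursion, except that its child along x_n^j
   removes a box from the LAST row of \<mu> having the length of row j.  The two resulting
   compositions differ by transpositions of equal adjacent parts, and the set of row-word monomials
   is invariant under adjacent transpositions of the composition (word_monomials_swap), by a
   switching argument on row words.  Induction on n then gives B(\<mu>) = A(\<mu>). *)

section \<open>Row words and their monomials\<close>

definition row_count :: "(nat \<Rightarrow> nat) \<Rightarrow> nat \<Rightarrow> nat \<Rightarrow> nat" where
  "row_count w r t = card {v\<in>{1..<t}. w v = r}"

definition dim_rows :: "(nat \<Rightarrow> nat) \<Rightarrow> nat \<Rightarrow> nat set" where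
  "dim_rows w j = {R. R \<noteq> w j \<and> (row_count w (w j) j + 2 \<le> row_count w R j \<or>
                       (row_count w R j = row_count w (w j) j + 1 \<and> R < w j))}"

definition word_monomial :: "nat \<Rightarrow> (nat \<Rightarrow> nat) \<Rightarrow> monomial" where
  "word_monomial n w = (\<lambda>j. if 2 \<le> j \<and> j \<le> n then card (dim_rows w j) else 0)"

definition row_word :: "nat list \<Rightarrow> (nat \<Rightarrow> nat) \<Rightarrow> bool" where
  "row_word \<mu> w \<longleftrightarrow> (\<forall>v\<in>{1..sum_list \<mu>}. w v < length \<mu>) \<and>
     (\<forall>r<length \<mu>. row_count w r (Suc (sum_list \<mu>)) = \<mu>!r)"

definition word_monomials :: "nat list \<Rightarrow> monomial set" where
  "word_monomials \<mu> = {word_monomial (sum_list \<mu>) w | w. row_word \<mu> w}"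

lemma in_diagram: "(r, c) \<in> diagram \<mu> \<longleftrightarrow> r < length \<mu> \<and> c < \<mu>!r"
  unfolding diagram_def by simp

lemma row_count_cong:
  assumes "\<And>v. 1 \<le> v \<Longrightarrow> v < t \<Longrightarrow> w v = w' v"
  shows "row_count w r t = row_count w' r t"
  unfolding row_count_def using assms by (intro arg_cong[where f=card]) auto

lemma dim_rows_cong:
  assumes "\<And>v. 1 \<le> v \<Longrightarrow> v \<le> j \<Longrightarrow> w v = w' v" and "1 \<le> j"
  shows "dim_rows w j = dim_rows w' j"
proof -
  have "row_count w r t = row_count w' r t" if "t \<le> j" for r t
    by (rule row_count_cong) (use assms that in auto)
  moreover have "w j = w' j" using assms by auto
  ultimately show ?thesis unfolding dim_rows_def by simp
qed

lemma word_monomial_cong: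
  assumes "\<And>v. 1 \<le> v \<Longrightarrow> v \<le> n \<Longrightarrow> w v = w' v"
  shows "word_monomial n w = word_monomial n w'"
  unfolding word_monomial_def using dim_rows_cong[of _ w w'] assms by fastforce

lemma row_count_Suc:
  assumes "1 \<le> j"
  shows "row_count w r (Suc j) = row_count w r j + (if w j = r then 1 else 0)"
proof -
  have "{v\<in>{1..<Suc j}. w v = r} = {v\<in>{1..<j}. w v = r} \<union> (if w j = r then {j} else {})"
    using assms by (auto simp: less_Suc_eq)
  then show ?thesis unfolding row_count_def by (auto simp: card_Un_disjoint)
qed

lemma row_count_outside:
  assumes "row_word \<mu> w" "length \<mu> \<le> r" "t \<le> Suc (sum_list \<mu>)"
  shows "row_count w r t = 0"
  using assms unfolding row_count_def row_word_def by force

section \<open>Invariance under transposing adjacent parts of the composition\<close>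

lemma row_count_switch_tail:
  assumes tie: "row_count w a t0 = row_count w b t0" and t0: "1 \<le> t0" "t0 \<le> t"
  shows "row_count (\<lambda>v. if t0 \<le> v then Transposition.transpose a b (w v) else w v) R t
           = row_count w (Transposition.transpose a b R) t"
proof -
  let ?\<tau> = "Transposition.transpose a b"
  let ?g = "\<lambda>v. if t0 \<le> v then ?\<tau> (w v) else w v"
  have prefix: "card {v\<in>{1..<t0}. w v = R} = card {v\<in>{1..<t0}. w v = ?\<tau> R}"
    using tie unfolding row_count_def by (auto simp: transpose_def)
  have split_g: "{v\<in>{1..<t}. ?g v = R} = {v\<in>{1..<t0}. w v = R} \<union> {v\<in>{t0..<t}. w v = ?\<tau> R}"
    using t0 by (auto simp: transpose_def)
  have split_w: "{v\<in>{1..<t}. w v = ?\<tau> R} = {v\<in>{1..<t0}. w v = ?\<tau> R} \<union> {v\<in>{t0..<t}. w v = ?\<tau> R}"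
    using t0 by auto
  have "row_count ?g R t = card {v\<in>{1..<t0}. w v = R} + card {v\<in>{t0..<t}. w v = ?\<tau> R}"
    unfolding row_count_def split_g by (rule card_Un_disjoint) auto
  also have "\<dots> = row_count w (?\<tau> R) t"
    unfolding row_count_def split_w prefix by (rule card_Un_disjoint[symmetric]) auto
  finally show ?thesis .
qed

lemma less_transpose_adjacent:
  assumes "{Transposition.transpose i (Suc i) x, y} \<noteq> {i, Suc i}"
  shows "x < Transposition.transpose i (Suc i) y \<longleftrightarrow> Transposition.transpose i (Suc i) x < y"
  using assms by (auto simp: transpose_def)

text \<open>After switching the tail at a tie t0 of two adjacent rows, the rows contributing to an
  entry j are transposed as well, provided the two rows do not tie again up to position j + 1:
  a second tie is the only way the transposition could disturb the order condition on rows.\<close>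

lemma dim_rows_switch_tail:
  fixes i :: nat
  defines "\<tau> \<equiv> Transposition.transpose i (Suc i)"
  assumes tie: "row_count w i t0 = row_count w (Suc i) t0" and t0: "1 \<le> t0" "t0 \<le> j"
    and no_tie: "\<And>t. t0 < t \<Longrightarrow> t \<le> Suc j \<Longrightarrow> row_count w i t \<noteq> row_count w (Suc i) t"
  shows "dim_rows (\<lambda>v. if t0 \<le> v then \<tau> (w v) else w v) j = \<tau> ` dim_rows w j"
proof -
  let ?g = "\<lambda>v. if t0 \<le> v then \<tau> (w v) else w v"
  have \<tau>\<tau>: "\<tau> (\<tau> x) = x" for x unfolding \<tau>_def by simp
  have g_j: "?g j = \<tau> (w j)" using t0 by simp
  have count_g: "row_count ?g R j = row_count w (\<tau> R) j" for R
    unfolding \<tau>_def by (rule row_count_switch_tail[OF tie t0])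
  have order: "R < \<tau> (w j) \<longleftrightarrow> \<tau> R < w j"
    if ahead: "row_count w (\<tau> R) j = row_count w (w j) j + 1" and ne: "\<tau> R \<noteq> w j" for R
  proof (rule less_transpose_adjacent[of i, folded \<tau>_def])
    show "{\<tau> R, w j} \<noteq> {i, Suc i}"
    proof
      assume pair: "{\<tau> R, w j} = {i, Suc i}"
      have "row_count w i (Suc j) = row_count w (Suc i) (Suc j)"
        using pair ahead ne row_count_Suc[of j w i] row_count_Suc[of j w "Suc i"] t0
        by (auto simp: doubleton_eq_iff)
      then show False using no_tie[of "Suc j"] t0 by simp
    qed
  qed
  have "R \<in> dim_rows ?g j \<longleftrightarrow> \<tau> R \<in> dim_rows w j" for R
  proof -
    have ne: "R \<noteq> \<tau> (w j) \<longleftrightarrow> \<tau> R \<noteq> w j" using \<tau>\<tau> by metis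
    show ?thesis
      unfolding dim_rows_def mem_Collect_eq g_j count_g \<tau>\<tau> ne using order[of R] by blast
  qed
  then have "dim_rows ?g j = \<tau> -` dim_rows w j" by blast
  also have "\<dots> = \<tau> ` dim_rows w j"
    unfolding \<tau>_def by (simp add: bij_vimage_eq_inv_image)
  finally show ?thesis .
qed

lemma sum_list_swap_adjacent:
  fixes \<mu> :: "nat list"
  assumes "Suc i < length \<mu>"
  shows "sum_list (\<mu>[i := \<mu>!Suc i, Suc i := \<mu>!i]) = sum_list \<mu>"
proof -
  have "mset (\<mu>[i := \<mu>!Suc i, Suc i := \<mu>!i]) = mset \<mu>" using assms mset_swap[of "Suc i" \<mu> i] by simp
  then show ?thesis by (metis sum_mset_sum_list)
qed

text \<open>Transposing two adjacent parts of the composition does not change the monomial of a row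
  word: switch rows i and i + 1 after their last tie t0 (position 1 is always a tie, and no later
  tie exists up to n + 1 by maximality), which turns the row word of \<mu> into one of the
  transposed composition with the same dimension-row counts at every entry.\<close>

lemma row_word_swap:
  assumes w: "row_word \<mu> w" and i: "Suc i < length \<mu>"
  shows "\<exists>w'. row_word (\<mu>[i := \<mu>!Suc i, Suc i := \<mu>!i]) w' \<and>
               word_monomial (sum_list \<mu>) w' = word_monomial (sum_list \<mu>) w"
proof -
  define n where "n = sum_list \<mu>"
  define \<nu> where "\<nu> = \<mu>[i := \<mu>!Suc i, Suc i := \<mu>!i]"
  define \<tau> where "\<tau> = Transposition.transpose i (Suc i)"
  have sum_\<nu>: "sum_list \<nu> = n" unfolding \<nu>_def n_def using sum_list_swap_adjacent[OF i] .
  define tie where "tie t \<longleftrightarrow> 1 \<le> t \<and> t \<le> Suc n \<and> row_count w i t = row_count w (Suc i) t" for t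
  define t0 where "t0 = (GREATEST t. tie t)"
  have tie_bound: "tie t \<Longrightarrow> t \<le> Suc n" for t unfolding tie_def by auto
  have "tie 1" unfolding tie_def row_count_def by simp
  then have tie_t0: "tie t0" unfolding t0_def by (rule GreatestI_nat) (rule tie_bound)
  have last_tie: "tie t \<Longrightarrow> t \<le> t0" for t
    unfolding t0_def by (rule Greatest_le_nat) (use tie_bound in auto)
  have t0: "1 \<le> t0" "t0 \<le> Suc n" and tie0: "row_count w i t0 = row_count w (Suc i) t0"
    using tie_t0 unfolding tie_def by auto
  define w' where "w' v = (if t0 \<le> v then \<tau> (w v) else w v)" for v
  have "row_word \<nu> w'"
    unfolding row_word_def sum_\<nu>
  proof (intro conjI allI impI ballI)
    fix v assume "v \<in> {1..n}"
    then have "w v < length \<mu>" using w unfolding row_word_def n_def by auto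
    then show "w' v < length \<nu>" using i unfolding w'_def \<nu>_def \<tau>_def transpose_def by auto
  next
    fix r assume r: "r < length \<nu>"
    have "row_count w' r (Suc n) = row_count w (\<tau> r) (Suc n)"
      unfolding w'_def \<tau>_def by (rule row_count_switch_tail[OF tie0 t0])
    also have "\<dots> = \<nu> ! r"
      using w r i unfolding row_word_def n_def \<nu>_def \<tau>_def transpose_def
      by (auto simp: nth_list_update)
    finally show "row_count w' r (Suc n) = \<nu> ! r" .
  qed
  moreover have "word_monomial n w' = word_monomial n w"
  proof
    fix j
    show "word_monomial n w' j = word_monomial n w j"
    proof (cases "2 \<le> j \<and> j \<le> n")
      case False then show ?thesis unfolding word_monomial_def by auto
    next
      case j: True
      show ?thesis
      proof (cases "j < t0")
        case True
        then have "dim_rows w' j = dim_rows w j"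
          by (intro dim_rows_cong) (use j in \<open>auto simp: w'_def\<close>)
        then show ?thesis unfolding word_monomial_def by simp
      next
        case False
        have no_tie: "row_count w i t \<noteq> row_count w (Suc i) t" if "t0 < t" "t \<le> Suc j" for t
          using last_tie[of t] that t0 j unfolding tie_def by auto
        have "dim_rows w' j = \<tau> ` dim_rows w j"
          unfolding w'_def \<tau>_def using dim_rows_switch_tail[OF tie0 t0(1) _ no_tie] False by simp
        then have "card (dim_rows w' j) = card (dim_rows w j)"
          unfolding \<tau>_def by (simp add: card_image)
        then show ?thesis unfolding word_monomial_def by simp
      qed
    qed
  qed
  ultimately show ?thesis unfolding \<nu>_def n_def by blast
qed

lemma word_monomials_swap:
  assumes "Suc i < length \<mu>"
  shows "word_monomials (\<mu>[i := \<mu>!Suc i, Suc i := \<mu>!i]) = word_monomials \<mu>"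
proof -
  have sub: "word_monomials \<mu> \<subseteq> word_monomials (\<mu>[i := \<mu>!Suc i, Suc i := \<mu>!i])"
    if i: "Suc i < length \<mu>" for \<mu>
  proof
    fix p assume "p \<in> word_monomials \<mu>"
    then obtain w where w: "row_word \<mu> w" and p: "p = word_monomial (sum_list \<mu>) w"
      unfolding word_monomials_def by auto
    note sum_list_swap_adjacent[OF i]
    moreover obtain w' where "row_word (\<mu>[i := \<mu>!Suc i, Suc i := \<mu>!i]) w'"
      and "word_monomial (sum_list \<mu>) w' = p"
      using row_word_swap[OF w i] p by blast
    ultimately show "p \<in> word_monomials (\<mu>[i := \<mu>!Suc i, Suc i := \<mu>!i])"
      unfolding word_monomials_def by force
  qed
  define \<nu> where "\<nu> = \<mu>[i := \<mu>!Suc i, Suc i := \<mu>!i]"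
  have "Suc i < length \<nu>" and "\<nu>[i := \<nu>!Suc i, Suc i := \<nu>!i] = \<mu>"
    unfolding \<nu>_def using assms by (auto simp: nth_list_update list_eq_iff_nth_eq)
  then have "word_monomials \<nu> \<subseteq> word_monomials \<mu>" using sub[of \<nu>] by simp
  then show ?thesis using sub[OF assms] unfolding \<nu>_def by blast
qed

lemma word_monomials_update_in_block:
  assumes "j \<le> j'" "j' < length \<mu>" "\<And>l. j \<le> l \<Longrightarrow> l \<le> j' \<Longrightarrow> \<mu>!l = \<mu>!j"
  shows "word_monomials (\<mu>[j' := x]) = word_monomials (\<mu>[j := x])"
  using assms
proof (induction j')
  case 0 then show ?case by simp
next
  case (Suc l)
  show ?case
  proof (cases "j = Suc l")
    case False
    then have jl: "j \<le> l" using Suc.prems(1) by simp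
    have IH: "word_monomials (\<mu>[l := x]) = word_monomials (\<mu>[j := x])"
    proof (rule Suc.IH[OF jl])
      show "l < length \<mu>" using Suc.prems(2) by simp
      show "\<mu>!l' = \<mu>!j" if "j \<le> l'" "l' \<le> l" for l'
        by (rule Suc.prems(3)) (use that in auto)
    qed
    have len: "Suc l < length (\<mu>[l := x])" using Suc.prems(2) by simp
    have "\<mu>!Suc l = \<mu>!l" using Suc.prems(3)[of l] Suc.prems(3)[of "Suc l"] jl by simp
    then have swapped: "(\<mu>[l := x])[l := \<mu>[l := x]!Suc l, Suc l := \<mu>[l := x]!l] = \<mu>[Suc l := x]"
      using Suc.prems(2) by (auto simp: nth_list_update list_eq_iff_nth_eq)
    show ?thesis using word_monomials_swap[OF len] IH unfolding swapped by simp
  qed simp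
qed

section \<open>Deleting the last letter of a row word\<close>

text \<open>The number of rows of \<mu> lying above row r in the order "longer, or equally long and
  higher up"; it is the exponent contributed by the entry placed last in row r.\<close>

definition rows_above :: "nat list \<Rightarrow> nat \<Rightarrow> nat" where
  "rows_above \<mu> r = card {R. R < length \<mu> \<and> R \<noteq> r \<and> (\<mu>!r + 1 \<le> \<mu>!R \<or> (\<mu>!R = \<mu>!r \<and> R < r))}"

definition filled_rows :: "nat list \<Rightarrow> nat set" where
  "filled_rows \<mu> = {r. r < length \<mu> \<and> 0 < \<mu>!r}"

lemma sum_list_decrement:
  assumes "r < length \<mu>" "0 < \<mu>!r" "sum_list \<mu> = Suc m"
  shows "sum_list (\<mu>[r := \<mu>!r - 1]) = m"
  using assms sum_list_update[of r \<mu> "\<mu>!r - 1"] elem_le_sum_list[of r \<mu>] by simp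

lemma row_word_last_letter:
  assumes w: "row_word \<mu> w" and n: "sum_list \<mu> = Suc m"
  defines "r \<equiv> w (Suc m)"
  shows "r < length \<mu>" and "0 < \<mu>!r" and "row_word (\<mu>[r := \<mu>!r - 1]) w"
    and "word_monomial (Suc m) w = (word_monomial m w)(Suc m := rows_above \<mu> r)"
proof -
  show r: "r < length \<mu>" using w n unfolding row_word_def r_def by auto
  have full: "row_count w R (Suc m) + (if r = R then 1 else 0) = \<mu>!R" if "R < length \<mu>" for R
    using w n that row_count_Suc[of "Suc m" w R] unfolding row_word_def r_def by auto
  have prefix: "row_count w R (Suc m) = \<mu>[r := \<mu>!r - 1] ! R" if "R < length \<mu>" for R
    using full[OF that] that by (cases "R = r") auto
  have outside: "row_count w R (Suc m) = 0" if "length \<mu> \<le> R" for R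
    using row_count_outside[OF w that] n by simp
  show pos: "0 < \<mu>!r" using full[OF r] by simp
  have shortened: "sum_list (\<mu>[r := \<mu>!r - 1]) = m" using sum_list_decrement[OF r pos n] .
  show "row_word (\<mu>[r := \<mu>!r - 1]) w"
    unfolding row_word_def shortened
  proof (intro conjI ballI allI impI)
    fix v assume "v \<in> {1..m}"
    then show "w v < length (\<mu>[r := \<mu>!r - 1])" using w n unfolding row_word_def by simp
  next
    fix R assume "R < length (\<mu>[r := \<mu>!r - 1])"
    then show "row_count w R (Suc m) = \<mu>[r := \<mu>!r - 1] ! R" using prefix by simp
  qed
  have "R \<in> dim_rows w (Suc m) \<longleftrightarrow>
        R < length \<mu> \<and> R \<noteq> r \<and> (\<mu>!r + 1 \<le> \<mu>!R \<or> (\<mu>!R = \<mu>!r \<and> R < r))" for R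
  proof (cases "R < length \<mu>")
    case True
    then show ?thesis
      unfolding dim_rows_def r_def[symmetric] mem_Collect_eq prefix[OF True] prefix[OF r]
      using pos r by (auto simp: nth_list_update)
  next
    case False
    then show ?thesis unfolding dim_rows_def r_def[symmetric] mem_Collect_eq using outside[of R] by simp
  qed
  then have "dim_rows w (Suc m) =
      {R. R < length \<mu> \<and> R \<noteq> r \<and> (\<mu>!r + 1 \<le> \<mu>!R \<or> (\<mu>!R = \<mu>!r \<and> R < r))}" by blast
  then have dim_last: "card (dim_rows w (Suc m)) = rows_above \<mu> r"
    unfolding rows_above_def by simp
  have "dim_rows w (Suc 0) = {}" unfolding dim_rows_def row_count_def by simp
  then have "rows_above \<mu> r = 0" if "m = 0" using dim_last that by simp
  then show "word_monomial (Suc m) w = (word_monomial m w)(Suc m := rows_above \<mu> r)"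
    unfolding word_monomial_def using dim_last by (auto simp: fun_eq_iff le_Suc_eq)
qed

lemma row_word_append:
  assumes r: "r < length \<mu>" and pos: "0 < \<mu>!r" and n: "sum_list \<mu> = Suc m"
    and w: "row_word (\<mu>[r := \<mu>!r - 1]) w"
  shows "row_word \<mu> (w(Suc m := r))" (is "row_word \<mu> ?w")
proof -
  have shortened: "sum_list (\<mu>[r := \<mu>!r - 1]) = m" using sum_list_decrement[OF r pos n] .
  show ?thesis
    unfolding row_word_def n
  proof (intro conjI allI impI ballI)
    fix v assume "v \<in> {1..Suc m}" then show "?w v < length \<mu>"
      using w r unfolding row_word_def shortened by (auto simp: le_Suc_eq)
  next
    fix R assume R: "R < length \<mu>"
    have "row_count ?w R (Suc m) = row_count w R (Suc m)" by (rule row_count_cong) auto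
    also have "\<dots> = \<mu>[r := \<mu>!r - 1] ! R" using w R unfolding row_word_def shortened by auto
    finally have "row_count ?w R (Suc (Suc m)) = \<mu>[r := \<mu>!r - 1] ! R + (if r = R then 1 else 0)"
      using row_count_Suc[of "Suc m" ?w R] by simp
    then show "row_count ?w R (Suc (Suc m)) = \<mu> ! R" using pos R by (cases "r = R") auto
  qed
qed

lemma word_monomials_rec:
  assumes n: "sum_list \<mu> = Suc m"
  shows "word_monomials \<mu> =
    (\<Union>r\<in>filled_rows \<mu>. (\<lambda>p. p(Suc m := rows_above \<mu> r)) ` word_monomials (\<mu>[r := \<mu>!r - 1]))"
    (is "_ = ?rec")
proof (intro set_eqI iffI)
  fix p assume "p \<in> word_monomials \<mu>"
  then obtain w where w: "row_word \<mu> w" and p: "p = word_monomial (Suc m) w"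
    unfolding word_monomials_def n by auto
  define r where "r = w (Suc m)"
  note last = row_word_last_letter[OF w n, folded r_def]
  have "sum_list (\<mu>[r := \<mu>!r - 1]) = m" using sum_list_decrement[OF last(1,2) n] .
  then have "word_monomial m w \<in> word_monomials (\<mu>[r := \<mu>!r - 1])"
    unfolding word_monomials_def using last(3) by force
  then show "p \<in> ?rec" using last p unfolding filled_rows_def by blast
next
  fix p assume "p \<in> ?rec"
  then obtain r q where r: "r < length \<mu>" and pos: "0 < \<mu>!r"
    and q: "q \<in> word_monomials (\<mu>[r := \<mu>!r - 1])" and p: "p = q(Suc m := rows_above \<mu> r)"
    unfolding filled_rows_def by blast
  obtain w where w: "row_word (\<mu>[r := \<mu>!r - 1]) w" and q_w: "q = word_monomial m w"
    using q unfolding word_monomials_def sum_list_decrement[OF r pos n] by auto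
  let ?w = "w(Suc m := r)"
  have "row_word \<mu> ?w" using row_word_append[OF r pos n w] .
  moreover have "word_monomial m ?w = word_monomial m w" by (rule word_monomial_cong) auto
  ultimately have "word_monomial (Suc m) ?w = p"
    using row_word_last_letter(4)[of \<mu> ?w m] n p q_w by simp
  then show "p \<in> word_monomials \<mu>" using \<open>row_word \<mu> ?w\<close> unfolding word_monomials_def n by blast
qed

lemma row_word_exists: "\<exists>w. row_word \<mu> w"
proof (induction "sum_list \<mu>" arbitrary: \<mu>)
  case 0
  have "\<mu>!r = 0" if "r < length \<mu>" for r
    using 0 nth_mem[OF that] by (simp add: sum_list_eq_0_iff)
  then have "row_word \<mu> (\<lambda>_. 0)" unfolding row_word_def using 0[symmetric] by (auto simp: row_count_def)
  then show ?case by blast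
next
  case (Suc m)
  have "\<exists>r. r < length \<mu> \<and> 0 < \<mu>!r"
  proof (rule ccontr)
    assume "\<nexists>r. r < length \<mu> \<and> 0 < \<mu>!r"
    then have "\<forall>x\<in>set \<mu>. x = 0" by (auto simp: in_set_conv_nth)
    then have "sum_list \<mu> = 0" by (metis sum_list_eq_0_iff)
    then show False using Suc(2) by linarith
  qed
  then obtain r where r: "r < length \<mu>" and pos: "0 < \<mu>!r" by blast
  obtain w where "row_word (\<mu>[r := \<mu>!r - 1]) w"
    using Suc(1) sum_list_decrement[OF r pos Suc(2)[symmetric]] by metis
  then show ?case using row_word_append[OF r pos Suc(2)[symmetric]] by blast
qed

lemma word_monomials_small:
  assumes "sum_list \<mu> \<le> 1"
  shows "word_monomials \<mu> = {(\<lambda>_. 0)}"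
proof -
  have "word_monomial (sum_list \<mu>) w = (\<lambda>_. 0)" for w
    using assms unfolding word_monomial_def by auto
  then show ?thesis unfolding word_monomials_def using row_word_exists[of \<mu>] by auto
qed

section \<open>The GP-tree of a partition diagram\<close>

lemma down_closed_eq_lessThan:
  fixes S :: "nat set"
  assumes "finite S" and down: "\<And>r r'. r \<in> S \<Longrightarrow> r' < r \<Longrightarrow> r' \<in> S"
  shows "S = {..<card S}"
proof -
  obtain N where "N \<notin> S" using assms(1) infinite_UNIV_nat by (meson ex_new_if_finite)
  define M where "M = (LEAST r. r \<notin> S)"
  have M: "M \<notin> S" unfolding M_def by (rule LeastI[of _ N]) (rule \<open>N \<notin> S\<close>)
  have "r \<in> S" if "r < M" for r using that not_less_Least unfolding M_def by blast
  moreover have "r < M" if "r \<in> S" for r using down[OF that, of M] M that by (metis linorder_neqE_nat)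
  ultimately have "S = {..<M}" by auto
  then show ?thesis by simp
qed

lemma nonzero_rows_diagram: "nonzero_rows (diagram \<mu>) = filled_rows \<mu>"
  unfolding nonzero_rows_def diagram_def filled_rows_def by auto

lemma far_right_diagram: "far_right (diagram \<mu>) = (\<lambda>r. (r, \<mu>!r - 1)) ` filled_rows \<mu>"
proof -
  have "row_len (diagram \<mu>) r = \<mu>!r" if "r < length \<mu>" for r
    using that unfolding row_len_def diagram_def by simp
  then show ?thesis
    unfolding far_right_def nonzero_rows_diagram unfolding filled_rows_def by auto
qed

lemma diagram_remove_last_box:
  assumes "l < length \<mu>" "0 < \<mu>!l"
  shows "diagram (\<mu>[l := \<mu>!l - 1]) = diagram \<mu> - {(l, \<mu>!l - 1)}"
  using assms unfolding diagram_def by (auto simp: nth_list_update split: if_splits)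

text \<open>The last row of \<mu> having the same length as row j; the GP-tree removes its last box.\<close>

definition last_equal_row :: "nat list \<Rightarrow> nat \<Rightarrow> nat" where
  "last_equal_row \<mu> j = (GREATEST l. l < length \<mu> \<and> \<mu>!l = \<mu>!j)"

context
  fixes \<mu> :: "nat list"
  assumes partition: "sorted (rev \<mu>)"
begin

lemma parts_antimono: "i \<le> j \<Longrightarrow> j < length \<mu> \<Longrightarrow> \<mu>!j \<le> \<mu>!i"
  using sorted_rev_nth_mono[OF partition] by blast

lemma filled_rows_eq: "filled_rows \<mu> = {..<card (filled_rows \<mu>)}"
proof (rule down_closed_eq_lessThan)
  show "finite (filled_rows \<mu>)" unfolding filled_rows_def by simp
next
  fix r r' assume "r \<in> filled_rows \<mu>" "r' < r"
  then show "r' \<in> filled_rows \<mu>" unfolding filled_rows_def using parts_antimono[of r' r] by auto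
qed

text \<open>For a partition the dimension order of the far-right boxes is simply top to bottom, so
  the box labelled j + 1 is the last box of row j.\<close>

lemma dim_label_diagram:
  assumes j: "j \<in> filled_rows \<mu>"
  shows "dim_label (diagram \<mu>) (j, \<mu>!j - 1) = Suc j"
proof -
  have before_iff: "dim_before (R, \<mu>!R - 1) (j, \<mu>!j - 1) \<longleftrightarrow> R < j" if R: "R \<in> filled_rows \<mu>" for R
    using parts_antimono[of R j] parts_antimono[of j R] j R
    unfolding dim_before_def filled_rows_def by (cases "R < j") auto
  have "R \<in> filled_rows \<mu>" if "R < j" for R
    using j that parts_antimono[of R j] unfolding filled_rows_def by auto
  then have "{p \<in> far_right (diagram \<mu>). dim_before p (j, \<mu>!j - 1)} = (\<lambda>r. (r, \<mu>!r - 1)) ` {..<j}"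
    unfolding far_right_diagram using before_iff by auto
  moreover have "card ((\<lambda>r. (r, \<mu>!r - 1)) ` {..<j}) = j"
    by (subst card_image) (auto simp: inj_on_def)
  ultimately show ?thesis unfolding dim_label_def by simp
qed

lemma labelled_box_diagram:
  assumes j: "j \<in> filled_rows \<mu>"
  shows "(THE b. b \<in> far_right (diagram \<mu>) \<and> dim_label (diagram \<mu>) b = Suc j) = (j, \<mu>!j - 1)"
proof (rule the_equality)
  show "(j, \<mu>!j - 1) \<in> far_right (diagram \<mu>) \<and> dim_label (diagram \<mu>) (j, \<mu>!j - 1) = Suc j"
    using dim_label_diagram[OF j] j unfolding far_right_diagram by auto
next
  fix b assume "b \<in> far_right (diagram \<mu>) \<and> dim_label (diagram \<mu>) b = Suc j"
  then show "b = (j, \<mu>!j - 1)" unfolding far_right_diagram using dim_label_diagram by auto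
qed

lemma last_equal_row:
  assumes j: "j < length \<mu>"
  shows "j \<le> last_equal_row \<mu> j" and "last_equal_row \<mu> j < length \<mu>"
    and "\<mu>!last_equal_row \<mu> j = \<mu>!j"
    and "\<And>l. j \<le> l \<Longrightarrow> l \<le> last_equal_row \<mu> j \<Longrightarrow> \<mu>!l = \<mu>!j"
    and "\<And>r. r < length \<mu> \<Longrightarrow> \<mu>!j \<le> \<mu>!r \<longleftrightarrow> r \<le> last_equal_row \<mu> j"
proof -
  define P where "P l \<longleftrightarrow> l < length \<mu> \<and> \<mu>!l = \<mu>!j" for l
  have bound: "P l \<Longrightarrow> l \<le> length \<mu>" for l unfolding P_def by auto
  have "P j" using j P_def by simp
  have last: "P (last_equal_row \<mu> j)"
    unfolding last_equal_row_def P_def[symmetric] by (rule GreatestI_nat[where P=P, OF \<open>P j\<close> bound])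
  have greatest: "P l \<Longrightarrow> l \<le> last_equal_row \<mu> j" for l
    unfolding last_equal_row_def P_def[symmetric] by (rule Greatest_le_nat) (use bound in auto)
  show ge: "j \<le> last_equal_row \<mu> j" using greatest[OF \<open>P j\<close>] .
  show len: "last_equal_row \<mu> j < length \<mu>" and eq: "\<mu>!last_equal_row \<mu> j = \<mu>!j"
    using last P_def by auto
  show "\<And>l. j \<le> l \<Longrightarrow> l \<le> last_equal_row \<mu> j \<Longrightarrow> \<mu>!l = \<mu>!j"
    using parts_antimono len eq by (metis le_antisym le_less_trans)
  fix r assume r: "r < length \<mu>"
  show "\<mu>!j \<le> \<mu>!r \<longleftrightarrow> r \<le> last_equal_row \<mu> j"
  proof
    assume "\<mu>!j \<le> \<mu>!r"
    then show "r \<le> last_equal_row \<mu> j"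
      using ge greatest[of r] parts_antimono[of j r] r unfolding P_def by (cases "r \<le> j") auto
  next
    assume "r \<le> last_equal_row \<mu> j"
    then show "\<mu>!j \<le> \<mu>!r" using parts_antimono len eq by metis
  qed
qed

lemma remove_push_diagram:
  assumes j: "j \<in> filled_rows \<mu>"
  shows "remove_push (diagram \<mu>) (j, \<mu>!j - 1) = diagram \<mu> - {(last_equal_row \<mu> j, \<mu>!j - 1)}"
proof -
  have jl: "j < length \<mu>" and jp: "0 < \<mu>!j" using j filled_rows_def by auto
  note L = last_equal_row[OF jl]
  define c where "c = \<mu>!j - 1"
  have column: "(r, c) \<in> diagram \<mu> \<longleftrightarrow> r \<le> last_equal_row \<mu> j" for r
  proof -
    have "(r, c) \<in> diagram \<mu> \<longleftrightarrow> r < length \<mu> \<and> \<mu>!j \<le> \<mu>!r"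
      unfolding diagram_def c_def using jp by auto
    also have "\<dots> \<longleftrightarrow> r \<le> last_equal_row \<mu> j" using L(2) L(5) by (auto simp del: not_le)
    finally show ?thesis .
  qed
  have pushed: "{(r' - 1, c) | r'. r' > j \<and> (r', c) \<in> diagram \<mu>} = {(r, c) | r. j \<le> r \<and> r < last_equal_row \<mu> j}"
  proof (rule set_eqI)
    fix p :: box
    show "p \<in> {(r' - 1, c) | r'. r' > j \<and> (r', c) \<in> diagram \<mu>} \<longleftrightarrow> p \<in> {(r, c) | r. j \<le> r \<and> r < last_equal_row \<mu> j}"
      unfolding column by (auto, rule_tac x="Suc (fst p)" in exI, auto)
  qed
  show ?thesis
  proof (rule set_eqI)
    fix p :: box
    obtain r' c' where p: "p = (r', c')" by fastforce
    show "p \<in> remove_push (diagram \<mu>) (j, \<mu>!j - 1) \<longleftrightarrow> p \<in> diagram \<mu> - {(last_equal_row \<mu> j, \<mu>!j - 1)}"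
    proof (cases "c' = c")
      case True
      then show ?thesis
        unfolding remove_push_def fst_conv snd_conv c_def[symmetric] pushed p
        using column[of r'] L(1) by auto
    next
      case False
      then show ?thesis unfolding remove_push_def fst_conv snd_conv c_def[symmetric] pushed p by auto
    qed
  qed
qed

lemma gp_child_diagram:
  assumes j: "j \<in> filled_rows \<mu>"
  shows "gp_child (diagram \<mu>) j = diagram (\<mu>[last_equal_row \<mu> j := \<mu>!j - 1])"
proof -
  have jl: "j < length \<mu>" and jp: "0 < \<mu>!j" using j filled_rows_def by auto
  note L = last_equal_row[OF jl]
  show ?thesis unfolding gp_child_def labelled_box_diagram[OF j] remove_push_diagram[OF j]
    using diagram_remove_last_box[of "last_equal_row \<mu> j" \<mu>] L(2,3) jp by simp
qed

lemma sorted_remove_from_last_equal_row: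
  assumes j: "j < length \<mu>"
  shows "sorted (rev (\<mu>[last_equal_row \<mu> j := \<mu>!j - 1]))"
  unfolding sorted_rev_iff_nth_mono
proof (intro allI impI)
  note L = last_equal_row[OF j]
  fix a b assume ab: "a \<le> b" "b < length (\<mu>[last_equal_row \<mu> j := \<mu>!j - 1])"
  show "\<mu>[last_equal_row \<mu> j := \<mu>!j - 1] ! b \<le> \<mu>[last_equal_row \<mu> j := \<mu>!j - 1] ! a"
  proof (cases "a = last_equal_row \<mu> j")
    case True
    then have "b = last_equal_row \<mu> j \<or> \<mu>!b < \<mu>!j" using L(5)[of b] ab by auto
    then show ?thesis using True ab L(2,3) parts_antimono[of a b] by (auto simp: nth_list_update)
  next
    case False
    then show ?thesis using ab L(3) parts_antimono[of a b] by (cases "b = last_equal_row \<mu> j") auto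
  qed
qed

lemma rows_above_partition:
  assumes r: "r \<in> filled_rows \<mu>"
  shows "rows_above \<mu> r = r"
proof -
  have "R < length \<mu> \<and> R \<noteq> r \<and> (\<mu>!r + 1 \<le> \<mu>!R \<or> (\<mu>!R = \<mu>!r \<and> R < r)) \<longleftrightarrow> R < r" for R
  proof (cases "R < r")
    case True
    then show ?thesis using parts_antimono[of R r] r unfolding filled_rows_def by auto
  next
    case False
    then show ?thesis using parts_antimono[of r R] r unfolding filled_rows_def by auto
  qed
  then have "{R. R < length \<mu> \<and> R \<noteq> r \<and> (\<mu>!r + 1 \<le> \<mu>!R \<or> (\<mu>!R = \<mu>!r \<and> R < r))} = {..<r}"
    by blast
  then show ?thesis unfolding rows_above_def by simp
qed

end

text \<open>B(\<mu>) is the set of row-word monomials: both satisfy the recursion of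
  word_monomials_rec, the GP-child along x_n^j being the diagram of \<mu> with its last equal row
  to j shortened, which has the same row-word monomials as \<mu> with row j shortened.\<close>

theorem gp_monos_diagram:
  assumes "sorted (rev \<mu>)"
  shows "gp_monos (sum_list \<mu>) (diagram \<mu>) = word_monomials \<mu>"
  using assms
proof (induction "sum_list \<mu>" arbitrary: \<mu> rule: less_induct)
  case less
  note partition = less.prems
  show ?case
  proof (cases "sum_list \<mu> \<le> 1")
    case True
    then have "gp_monos (sum_list \<mu>) (diagram \<mu>) = {(\<lambda>_. 0)}"
      by (metis gp_monos.simps(1,2) One_nat_def le_SucE le_zero_eq)
    then show ?thesis using word_monomials_small[OF True] by simp
  next
    case False
    then obtain k where n: "sum_list \<mu> = Suc (Suc k)"
      by (metis One_nat_def less_Suc0 nat_le_linear not0_implies_Suc not_less_eq_eq)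
    have child: "gp_monos (Suc k) (gp_child (diagram \<mu>) j) = word_monomials (\<mu>[j := \<mu>!j - 1])"
      if j: "j \<in> filled_rows \<mu>" for j
    proof -
      have jl: "j < length \<mu>" and jp: "0 < \<mu>!j" using j filled_rows_def by auto
      note L = last_equal_row[OF partition jl]
      let ?\<nu> = "\<mu>[last_equal_row \<mu> j := \<mu>!j - 1]"
      have n_\<nu>: "sum_list ?\<nu> = Suc k"
        using sum_list_decrement[of "last_equal_row \<mu> j" \<mu>] L(2,3) jp n by simp
      have "gp_monos (Suc k) (gp_child (diagram \<mu>) j) = gp_monos (sum_list ?\<nu>) (diagram ?\<nu>)"
        using gp_child_diagram[OF partition j] n_\<nu> by simp
      also have "\<dots> = word_monomials ?\<nu>"
        using less.hyps[of ?\<nu>] n n_\<nu> sorted_remove_from_last_equal_row[OF partition jl] by simp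
      also have "\<dots> = word_monomials (\<mu>[j := \<mu>!j - 1])"
        using word_monomials_update_in_block[OF L(1,2,4)] .
      finally show ?thesis .
    qed
    have "gp_monos (sum_list \<mu>) (diagram \<mu>) =
      (\<Union>j<card (filled_rows \<mu>). (\<lambda>p. p(Suc (Suc k) := j)) ` gp_monos (Suc k) (gp_child (diagram \<mu>) j))"
      unfolding n by (simp add: nonzero_rows_diagram)
    also have "\<dots> = (\<Union>j\<in>filled_rows \<mu>. (\<lambda>p. p(Suc (Suc k) := j)) ` word_monomials (\<mu>[j := \<mu>!j - 1]))"
      using child filled_rows_eq[OF partition] by (metis (no_types, lifting) SUP_cong)
    also have "\<dots> = (\<Union>r\<in>filled_rows \<mu>. (\<lambda>p. p(Suc (Suc k) := rows_above \<mu> r)) ` word_monomials (\<mu>[r := \<mu>!r - 1]))"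
      using rows_above_partition[OF partition] by simp
    also have "\<dots> = word_monomials \<mu>"
      using word_monomials_rec[OF n] by simp
    finally show ?thesis .
  qed
qed

section \<open>Row-strict fillings and their row words\<close>

context
  fixes \<mu> :: "nat list" and T :: "box \<Rightarrow> nat" and w :: "nat \<Rightarrow> nat"
  assumes filling: "row_strict_filling \<mu> T"
    and row_of: "\<And>p. p \<in> diagram \<mu> \<Longrightarrow> w (T p) = fst p"
begin

lemma filling_inj: "inj_on T (diagram \<mu>)"
  and filling_image: "T ` diagram \<mu> = {1..sum_list \<mu>}"
  using filling unfolding row_strict_filling_def bij_betw_def by auto

lemma filling_row_less: "c < c' \<Longrightarrow> c' < \<mu>!r \<Longrightarrow> r < length \<mu> \<Longrightarrow> T (r, c) < T (r, c')"
  using filling unfolding row_strict_filling_def in_diagram by auto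

lemma filling_row_mono: "c \<le> c' \<Longrightarrow> c' < \<mu>!r \<Longrightarrow> r < length \<mu> \<Longrightarrow> T (r, c) \<le> T (r, c')"
  using filling_row_less by (cases "c = c'") (auto simp: less_imp_le)

lemma entries_below:
  assumes R: "R < length \<mu>" and t: "t \<le> Suc (sum_list \<mu>)"
  shows "{c. c < \<mu>!R \<and> T (R, c) < t} = {..<row_count w R t}"
proof -
  let ?C = "{c. c < \<mu>!R \<and> T (R, c) < t}"
  have "{v\<in>{1..<t}. w v = R} = (\<lambda>c. T (R, c)) ` ?C"
  proof (intro set_eqI iffI)
    fix v assume v: "v \<in> {v\<in>{1..<t}. w v = R}"
    then obtain p where "p \<in> diagram \<mu>" "v = T p" using filling_image t by force
    then show "v \<in> (\<lambda>c. T (R, c)) ` ?C" using row_of v unfolding diagram_def by auto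
  next
    fix v assume "v \<in> (\<lambda>c. T (R, c)) ` ?C"
    then obtain c where c: "c < \<mu>!R" "T (R, c) < t" "v = T (R, c)" by auto
    then have "(R, c) \<in> diagram \<mu>" using R in_diagram by auto
    then show "v \<in> {v\<in>{1..<t}. w v = R}" using filling_image row_of c by fastforce
  qed
  moreover have "inj_on (\<lambda>c. T (R, c)) ?C"
  proof (rule inj_onI)
    fix c c' assume "c \<in> ?C" "c' \<in> ?C" and eq: "T (R, c) = T (R, c')"
    then have "(R, c) \<in> diagram \<mu>" "(R, c') \<in> diagram \<mu>" using R in_diagram by auto
    then show "c = c'" using inj_onD[OF filling_inj eq] by simp
  qed
  ultimately have count: "row_count w R t = card ?C" unfolding row_count_def by (simp add: card_image)
  have "?C = {..<card ?C}"
  proof (rule down_closed_eq_lessThan)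
    fix c c' assume "c \<in> ?C" "c' < c"
    then show "c' \<in> ?C" using filling_row_less[of c' c R] R by fastforce
  qed simp
  then show ?thesis unfolding count .
qed

lemma row_count_eq_iff:
  assumes R: "R < length \<mu>" and t: "t \<le> Suc (sum_list \<mu>)" and k: "k \<le> \<mu>!R"
  shows "row_count w R t = k \<longleftrightarrow> (\<forall>c<k. T (R, c) < t) \<and> (k < \<mu>!R \<longrightarrow> t \<le> T (R, k))"
proof
  assume "row_count w R t = k"
  then have below: "c < \<mu>!R \<and> T (R, c) < t \<longleftrightarrow> c < k" for c
    using entries_below[OF R t] by (simp add: set_eq_iff)
  have "T (R, c) < t" if "c < k" for c using below[of c] that k by simp
  moreover have "t \<le> T (R, k)" if "k < \<mu>!R" using below[of k] that by simp
  ultimately show "(\<forall>c<k. T (R, c) < t) \<and> (k < \<mu>!R \<longrightarrow> t \<le> T (R, k))" by blast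
next
  assume below: "(\<forall>c<k. T (R, c) < t) \<and> (k < \<mu>!R \<longrightarrow> t \<le> T (R, k))"
  have above: "t \<le> T (R, c)" if "k \<le> c" "c < \<mu>!R" for c
  proof -
    have "t \<le> T (R, k)" using below that by simp
    also have "\<dots> \<le> T (R, c)" using filling_row_mono[OF that R] .
    finally show ?thesis .
  qed
  have "c < \<mu>!R \<and> T (R, c) < t \<longleftrightarrow> c < k" for c
    using below above[of c] k by (cases "c < k") auto
  then have "{..<row_count w R t} = {..<k}" unfolding entries_below[OF R t, symmetric] by auto
  then show "row_count w R t = k" by simp
qed

lemma row_count_le:
  assumes R: "R < length \<mu>" and t: "t \<le> Suc (sum_list \<mu>)"
  shows "row_count w R t \<le> \<mu>!R"
proof -
  have "{..<row_count w R t} \<subseteq> {..<\<mu>!R}" unfolding entries_below[OF R t, symmetric] by auto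
  then show ?thesis by simp
qed

lemma row_word_of_filling: "row_word \<mu> w"
  unfolding row_word_def
proof (intro conjI ballI allI impI)
  fix v assume "v \<in> {1..sum_list \<mu>}"
  then obtain p where "p \<in> diagram \<mu>" "v = T p" using filling_image by (metis imageE)
  then show "w v < length \<mu>" using row_of unfolding diagram_def by auto
next
  fix r assume r: "r < length \<mu>"
  have "T (r, c) < Suc (sum_list \<mu>)" if "c < \<mu>!r" for c
  proof -
    have "(r, c) \<in> diagram \<mu>" using r that in_diagram by simp
    then have "T (r, c) \<in> {1..sum_list \<mu>}" using filling_image by blast
    then show ?thesis by simp
  qed
  then show "row_count w r (Suc (sum_list \<mu>)) = \<mu>!r"
    using row_count_eq_iff[OF r, of "Suc (sum_list \<mu>)" "\<mu>!r"] by simp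
qed

lemma dim_pair_row:
  assumes pair: "dim_pair \<mu> T a b" and b: "T (rb, cb) = b" "(rb, cb) \<in> diagram \<mu>"
  obtains ca where "(w a, ca) \<in> diagram \<mu>" "T (w a, ca) = a" "row_count w (w a) b = Suc ca"
    and "w a \<in> dim_rows w b"
proof -
  obtain p q where p: "p \<in> diagram \<mu>" and q: "q \<in> diagram \<mu>" and Tp: "T p = a" and Tq: "T q = b"
    and ab: "a < b" and geo: "(snd q = snd p \<and> fst q > fst p) \<or> snd q < snd p"
    and next_box: "(fst p, Suc (snd p)) \<in> diagram \<mu> \<longrightarrow> b \<le> T (fst p, Suc (snd p))"
    using pair unfolding dim_pair_def by blast
  have q_eq: "q = (rb, cb)" using inj_onD[OF filling_inj] q b Tq by metis
  obtain ra ca where p_eq: "p = (ra, ca)" by fastforce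
  have ra: "ra < length \<mu>" "ca < \<mu>!ra" and rb: "rb < length \<mu>" "cb < \<mu>!rb"
    using p b(2) unfolding p_eq in_diagram by auto
  have wa: "w a = ra" and wb: "w b = rb" using row_of p Tp b unfolding p_eq by force+
  have "b \<in> {1..sum_list \<mu>}" using filling_image b by blast
  then have b_le: "b \<le> Suc (sum_list \<mu>)" by simp
  have "ra \<noteq> rb"
    using geo ab Tp Tq filling_row_less[of cb ca rb] ra rb unfolding p_eq q_eq by auto
  have count_a: "row_count w ra b = Suc ca"
    using row_count_eq_iff[OF ra(1) b_le, of "Suc ca"] ra next_box ab Tp
      filling_row_mono[of _ ca ra] unfolding p_eq in_diagram by (fastforce simp: less_Suc_eq_le)
  have count_b: "row_count w rb b = cb"
    using row_count_eq_iff[OF rb(1) b_le, of cb] rb b filling_row_less[of _ cb rb] by auto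
  have "w a \<in> dim_rows w b"
    using geo \<open>ra \<noteq> rb\<close> count_a count_b unfolding dim_rows_def wa wb p_eq q_eq by auto
  then show thesis using that p Tp count_a unfolding p_eq wa by blast
qed

lemma dim_rows_dim_pair:
  assumes R: "R \<in> dim_rows w b" and b: "T (rb, cb) = b" "(rb, cb) \<in> diagram \<mu>"
  defines "k \<equiv> row_count w R b"
  shows "dim_pair \<mu> T (T (R, k - 1)) b" and "w (T (R, k - 1)) = R"
proof -
  have rb: "rb < length \<mu>" "cb < \<mu>!rb" using b(2) in_diagram by auto
  have "b \<in> {1..sum_list \<mu>}" using filling_image b by blast
  then have b_le: "b \<le> Suc (sum_list \<mu>)" by simp
  have wb: "w b = rb" using row_of b by force
  have count_b: "row_count w rb b = cb"
    using row_count_eq_iff[OF rb(1) b_le, of cb] rb b filling_row_less[of _ cb rb] by auto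
  have k_ge: "Suc cb \<le> k" and "R \<noteq> rb" and geo: "cb + 2 \<le> k \<or> (k = cb + 1 \<and> R < rb)"
    using R unfolding dim_rows_def wb count_b k_def by auto
  have R_len: "R < length \<mu>"
    using row_count_outside[OF row_word_of_filling, of R b] b_le k_ge k_def by (cases "R < length \<mu>") auto
  have k_le: "k \<le> \<mu>!R" using row_count_le[OF R_len b_le] k_def by simp
  have box: "(R, k - 1) \<in> diagram \<mu>" using R_len k_le k_ge in_diagram by auto
  have entries: "T (R, k - 1) < b" "k < \<mu>!R \<longrightarrow> b \<le> T (R, k)"
    using row_count_eq_iff[OF R_len b_le k_le] k_def k_ge by auto
  show "w (T (R, k - 1)) = R" using row_of[OF box] by simp
  show "dim_pair \<mu> T (T (R, k - 1)) b"
    unfolding dim_pair_def using entries box b geo k_ge \<open>R \<noteq> rb\<close> in_diagram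
    by (intro conjI bexI[of _ "(R, k - 1)"] bexI[of _ "(rb, cb)"]) auto
qed

lemma card_dim_pairs:
  assumes b: "2 \<le> b" "b \<le> sum_list \<mu>"
  shows "card {a. dim_pair \<mu> T a b} = card (dim_rows w b)"
proof -
  have "b \<in> T ` diagram \<mu>" using filling_image b by simp
  then obtain rb cb where box_b: "T (rb, cb) = b" "(rb, cb) \<in> diagram \<mu>" by auto
  let ?A = "{a. dim_pair \<mu> T a b}"
  have "inj_on w ?A"
  proof (rule inj_onI)
    fix a a' assume "a \<in> ?A" "a' \<in> ?A" and eq: "w a = w a'"
    obtain ca where "T (w a, ca) = a" "row_count w (w a) b = Suc ca"
      using \<open>a \<in> ?A\<close> dim_pair_row[OF _ box_b] by blast
    moreover obtain ca' where "T (w a', ca') = a'" "row_count w (w a') b = Suc ca'"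
      using \<open>a' \<in> ?A\<close> dim_pair_row[OF _ box_b] by blast
    ultimately show "a = a'" using eq by simp
  qed
  moreover have "w ` ?A = dim_rows w b"
  proof
    show "w ` ?A \<subseteq> dim_rows w b" using dim_pair_row[OF _ box_b] by blast
    show "dim_rows w b \<subseteq> w ` ?A"
    proof
      fix R assume R: "R \<in> dim_rows w b"
      then show "R \<in> w ` ?A"
        using dim_rows_dim_pair[OF R box_b] by (metis (mono_tags, lifting) image_eqI mem_Collect_eq)
    qed
  qed
  ultimately show ?thesis using card_image by metis
qed

lemma Phi_eq_word_monomial: "Phi \<mu> T = word_monomial (sum_list \<mu>) w"
  unfolding Phi_def word_monomial_def using card_dim_pairs by auto

end

definition letter_positions :: "nat list \<Rightarrow> (nat \<Rightarrow> nat) \<Rightarrow> nat \<Rightarrow> nat list" where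
  "letter_positions \<mu> w r = sorted_list_of_set {v\<in>{1..<Suc (sum_list \<mu>)}. w v = r}"

definition filling_of_word :: "nat list \<Rightarrow> (nat \<Rightarrow> nat) \<Rightarrow> box \<Rightarrow> nat" where
  "filling_of_word \<mu> w = (\<lambda>(r, c). letter_positions \<mu> w r ! c)"

lemma filling_of_word_apply: "filling_of_word \<mu> w (r, c) = letter_positions \<mu> w r ! c"
  unfolding filling_of_word_def by simp

lemma set_letter_positions: "set (letter_positions \<mu> w r) = {v\<in>{1..<Suc (sum_list \<mu>)}. w v = r}"
  unfolding letter_positions_def by simp

context
  fixes \<mu> :: "nat list" and w :: "nat \<Rightarrow> nat"
  assumes w: "row_word \<mu> w"
begin

lemma length_letter_positions: "r < length \<mu> \<Longrightarrow> length (letter_positions \<mu> w r) = \<mu>!r"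
  using w unfolding row_word_def letter_positions_def row_count_def by simp

lemma filling_of_word_row:
  assumes "p \<in> diagram \<mu>"
  shows "filling_of_word \<mu> w p \<in> {1..sum_list \<mu>}" and "w (filling_of_word \<mu> w p) = fst p"
proof -
  obtain r c where p: "p = (r, c)" by fastforce
  have "c < length (letter_positions \<mu> w r)"
    using assms length_letter_positions unfolding p diagram_def by auto
  then have "filling_of_word \<mu> w p \<in> set (letter_positions \<mu> w r)"
    unfolding p filling_of_word_apply by simp
  then show "filling_of_word \<mu> w p \<in> {1..sum_list \<mu>}" "w (filling_of_word \<mu> w p) = fst p"
    unfolding set_letter_positions p by auto
qed

lemma row_strict_filling_of_word: "row_strict_filling \<mu> (filling_of_word \<mu> w)"
  unfolding row_strict_filling_def bij_betw_def
proof (intro conjI allI impI)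
  show "inj_on (filling_of_word \<mu> w) (diagram \<mu>)"
  proof (rule inj_onI)
    fix p p' assume p: "p \<in> diagram \<mu>" and p': "p' \<in> diagram \<mu>"
      and eq: "filling_of_word \<mu> w p = filling_of_word \<mu> w p'"
    have "fst p = fst p'" using filling_of_word_row(2)[OF p] filling_of_word_row(2)[OF p'] eq by simp
    then obtain r c c' where pp: "p = (r, c)" "p' = (r, c')" by (metis prod.collapse)
    have "c < length (letter_positions \<mu> w r)" "c' < length (letter_positions \<mu> w r)"
      using p p' length_letter_positions unfolding pp diagram_def by auto
    moreover have "distinct (letter_positions \<mu> w r)" unfolding letter_positions_def by simp
    ultimately show "p = p'" using eq unfolding pp filling_of_word_apply by (simp add: nth_eq_iff_index_eq)
  qed
  show "filling_of_word \<mu> w ` diagram \<mu> = {1..sum_list \<mu>}"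
  proof
    show "filling_of_word \<mu> w ` diagram \<mu> \<subseteq> {1..sum_list \<mu>}" using filling_of_word_row(1) by blast
    show "{1..sum_list \<mu>} \<subseteq> filling_of_word \<mu> w ` diagram \<mu>"
    proof
      fix v assume v: "v \<in> {1..sum_list \<mu>}"
      have r: "w v < length \<mu>" using w v unfolding row_word_def by auto
      have "v \<in> set (letter_positions \<mu> w (w v))" using v unfolding set_letter_positions by auto
      then obtain c where c: "c < length (letter_positions \<mu> w (w v))" "letter_positions \<mu> w (w v) ! c = v"
        by (metis in_set_conv_nth)
      then have "(w v, c) \<in> diagram \<mu>" using length_letter_positions[OF r] r unfolding diagram_def by auto
      then show "v \<in> filling_of_word \<mu> w ` diagram \<mu>" using c filling_of_word_apply by (metis image_eqI)
    qed
  qed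
next
  fix r c c' assume a: "(r, c) \<in> diagram \<mu>" "(r, c') \<in> diagram \<mu>" "c < c'"
  have "c' < length (letter_positions \<mu> w r)" using a length_letter_positions unfolding diagram_def by auto
  then show "filling_of_word \<mu> w (r, c) < filling_of_word \<mu> w (r, c')"
    unfolding filling_of_word_apply letter_positions_def
    using sorted_wrt_nth_less[OF strict_sorted_list_of_set a(3)] by simp
qed

end

theorem setA_eq_word_monomials: "setA \<mu> = word_monomials \<mu>"
proof (intro set_eqI iffI)
  fix p assume "p \<in> setA \<mu>"
  then obtain T where filling: "row_strict_filling \<mu> T" and p: "p = Phi \<mu> T"
    unfolding setA_def by auto
  define w where "w v = fst (inv_into (diagram \<mu>) T v)" for v
  have row_of: "w (T q) = fst q" if "q \<in> diagram \<mu>" for q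
    using filling that unfolding w_def row_strict_filling_def bij_betw_def by simp
  have "row_word \<mu> w" by (rule row_word_of_filling[OF filling]) (fact row_of)
  moreover have "Phi \<mu> T = word_monomial (sum_list \<mu>) w"
    by (rule Phi_eq_word_monomial[OF filling]) (fact row_of)
  ultimately show "p \<in> word_monomials \<mu>" unfolding word_monomials_def p by blast
next
  fix p assume "p \<in> word_monomials \<mu>"
  then obtain w where w: "row_word \<mu> w" and p: "p = word_monomial (sum_list \<mu>) w"
    unfolding word_monomials_def by auto
  note filling = row_strict_filling_of_word[OF w]
  have "Phi \<mu> (filling_of_word \<mu> w) = p"
    unfolding p by (rule Phi_eq_word_monomial[OF filling]) (fact filling_of_word_row(2)[OF w])
  then show "p \<in> setA \<mu>" unfolding setA_def using filling by blast
qed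

theorem mainTheorem8:
  fixes \<mu> :: "nat list" and n :: nat
  assumes "is_partition \<mu> n"
  shows "setA \<mu> = setB \<mu>"
proof -
  have "sorted (rev \<mu>)" using assms unfolding is_partition_def by simp
  then have "setB \<mu> = word_monomials \<mu>" unfolding setB_def by (rule gp_monos_diagram)
  then show ?thesis using setA_eq_word_monomials by simp
qed

end
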